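(* Let $L\in\mathbb{R}^{N\times N}$ be invertible, $C=LL^T$, and let $D$ be the diagonal matrix with $D_{ii}=\sqrt{C_{ii}}$. Let $D_{opt}$ be an invertible diagonal matrix minimizing $\kappa(G^{-1}L)$ over all invertible diagonal matrices $G$. Then $$\kappa(D^{-1}L)\le\sqrt{N}\,\kappa(D_{opt}^{-1}L).$$ Furthermore, if at most $K$ entries in each row of $LL^T$ are nonzero, then $$\kappa(D^{-1}L)\le\sqrt{K}\,\kappa(D_{opt}^{-1}L).$$
   Context: For an invertible matrix $B\in\mathbb{R}^{N\times N}$, $\kappa(B):=\|B\|_2\,\|B^{-1}\|_{S^4}$, where $\|\cdot\|_2$ is the spectral norm and $\|A\|_{S^4}:=\left(\sum_{n} s_n^4\right)^{1/4}$ with $s_n$ the singular values of $A$ (fourth Schatten norm). *)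

theory Defs
  imports "Jordan_Normal_Form.Char_Poly" "HOL-Computational_Algebra.Polynomial"
begin

definition mat_inv :: "real mat \<Rightarrow> real mat" where
  "mat_inv A = (SOME B. inverts_mat A B \<and> inverts_mat B A)"

definition vnorm2 :: "real vec \<Rightarrow> real" where
  "vnorm2 v = sqrt (\<Sum>i<dim_vec v. (v $ i)^2)"

(* spectral norm = operator 2-norm  sup_{|x|=1} |Ax|  (0 inserted only to make the
   sup well-defined for the degenerate 0x0 case; all norms are >= 0) *)
definition spec_norm :: "real mat \<Rightarrow> real" where
  "spec_norm A = Sup (insert 0 {vnorm2 (A *\<^sub>v x) | x. x \<in> carrier_vec (dim_col A) \<and> vnorm2 x = 1})"

definition singular_values :: "real mat \<Rightarrow> real multiset" where
  "singular_values A = image_mset sqrt (proots (char_poly (transpose_mat A * A)))"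

definition schatten4 :: "real mat \<Rightarrow> real" where
  "schatten4 A = root 4 (\<Sum>s\<in>#singular_values A. s ^ 4)"

definition kappa :: "real mat \<Rightarrow> real" where
  "kappa B = spec_norm B * schatten4 (mat_inv B)"

definition jacobi_diag :: "real mat \<Rightarrow> real mat" where
  "jacobi_diag L = (let C = L * transpose_mat L in
     mat (dim_row L) (dim_row L) (\<lambda>(i,j). if i = j then sqrt (C $$ (i,i)) else 0))"

end

(*
  D is the diagonal matrix of the row norms d_i of L; let G = diag(g_i) be any invertible
  diagonal matrix. Since (D^-1 L)^-1 = (G^-1 L)^-1 (G^-1 D) and |d_i / g_i| is the norm
  of the i-th row of G^-1 L, hence at most ||G^-1 L||_2, and since right multiplication by
  a diagonal matrix scales the S^4 norm by at most the largest modulus of its entries,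
  ||(D^-1 L)^-1||_S4 <= kappa(G^-1 L); thus kappa(D^-1 L) <= ||D^-1 L||_2 kappa(G^-1 L).
  The rows of D^-1 L are unit vectors, so its spectral norm is at most its Frobenius norm
  sqrt N. Their Gram matrix is the correlation matrix of L L^T: its entries have modulus
  at most 1 and it has at most K nonzero entries per row, which bounds the spectral norm
  by sqrt K.

  The S^4 norm is computed as the fourth root of trace((A^T A)^2), the sum of squared
  entries of A^T A; this needs that the characteristic polynomial of the symmetric matrix
  A^T A splits over the reals.
*)

theory Submission
  imports Defs "HOL-Analysis.Convex" "Jordan_Normal_Form.Schur_Decomposition"
begin

section \<open>Real symmetric matrices\<close>

lemma eigenvalue_real_symmetric_Reals:
  fixes M :: "real mat"
  assumes M: "M \<in> carrier_mat n n" and sym: "transpose_mat M = M"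
    and ev: "eigenvalue (map_mat complex_of_real M) e"
  shows "e \<in> \<real>"
proof -
  let ?M = "map_mat complex_of_real M"
  obtain v where v: "v \<in> carrier_vec n" "v \<noteq> 0\<^sub>v n" "?M *\<^sub>v v = e \<cdot>\<^sub>v v"
    using ev M unfolding eigenvalue_def eigenvector_def by auto
  have M_sym: "M $$ (j,i) = M $$ (i,j)" if "i < n" "j < n" for i j
    using that M arg_cong[OF sym, of "\<lambda>A. A $$ (i,j)"] by auto
  define s where "s = (\<Sum>i<n. \<Sum>j<n. cnj (v$i) * of_real (M $$ (i,j)) * v$j)"
  have "cnj s = (\<Sum>i<n. \<Sum>j<n. cnj (v$j) * of_real (M $$ (j,i)) * v$i)"
    unfolding s_def by (auto simp: M_sym mult_ac intro!: sum.cong)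
  also have "\<dots> = s"
    unfolding s_def by (rule sum.swap)
  finally have "s \<in> \<real>"
    by (simp add: Reals_cnj_iff)
  define r where "r = (\<Sum>i<n. (cmod (v$i))\<^sup>2)"
  have "s = (\<Sum>i<n. cnj (v$i) * (?M *\<^sub>v v) $ i)"
    unfolding s_def using M v(1)
    by (auto simp: scalar_prod_def atLeast0LessThan sum_distrib_left mult_ac intro!: sum.cong)
  also have "\<dots> = e * of_real r"
    unfolding v(3) r_def of_real_sum using v(1)
    by (simp add: sum_distrib_left complex_norm_square mult_ac flip: of_real_power)
  finally have s_eq: "s = e * of_real r" .
  obtain i where "i < n" "v $ i \<noteq> 0"
    using v(1,2) by (metis vec_eq_iff carrier_vecD index_zero_vec)
  then have "0 < r"
    unfolding r_def by (intro sum_pos2[of _ i]) auto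
  then have "e = s / of_real r"
    using s_eq by simp
  with \<open>s \<in> \<real>\<close> show ?thesis
    by simp
qed

lemma char_poly_real_symmetric_splits:
  fixes M :: "real mat"
  assumes M: "M \<in> carrier_mat n n" and sym: "transpose_mat M = M"
  obtains rs where "char_poly M = (\<Prod>r\<leftarrow>rs. [:-r, 1:])"
proof -
  interpret of_real_poly: map_poly_inj_idom_hom "of_real :: real \<Rightarrow> complex" ..
  let ?M = "map_mat complex_of_real M"
  have M': "?M \<in> carrier_mat n n"
    using M by simp
  obtain as where as: "char_poly ?M = (\<Prod>a\<leftarrow>as. [:-a, 1:])"
    using char_poly_factorized[OF M'] by blast
  have "a \<in> \<real>" if "a \<in> set as" for a
  proof -
    have "poly (char_poly ?M) a = 0"
      unfolding as using that by (simp add: poly_prod_list prod_list_zero_iff)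
    then show ?thesis
      using eigenvalue_root_char_poly[OF M'] eigenvalue_real_symmetric_Reals[OF M sym] by blast
  qed
  then have "map_poly complex_of_real (\<Prod>r\<leftarrow>map Re as. [:-r, 1:]) = (\<Prod>a\<leftarrow>as. [:-a, 1:])"
    unfolding of_real_poly.hom_prod_list by (auto simp: o_def intro!: arg_cong[where f = prod_list])
  moreover have "map_poly complex_of_real (char_poly M) = (\<Prod>a\<leftarrow>as. [:-a, 1:])"
    by (metis as of_real_hom.char_poly_hom[OF M])
  ultimately have "map_poly complex_of_real (char_poly M)
      = map_poly complex_of_real (\<Prod>r\<leftarrow>map Re as. [:-r, 1:])"
    by simp
  then have "char_poly M = (\<Prod>r\<leftarrow>map Re as. [:-r, 1:])"
    by (simp only: of_real_poly.eq_iff)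
  then show ?thesis
    by (rule that)
qed

section \<open>Trace\<close>

definition trace_mat :: "'a :: comm_monoid_add mat \<Rightarrow> 'a" where
  "trace_mat A = (\<Sum>i<dim_row A. A $$ (i,i))"

lemma trace_mat_mult_comm:
  fixes A B :: "'a :: comm_semiring_0 mat"
  assumes A: "A \<in> carrier_mat m n" and B: "B \<in> carrier_mat n m"
  shows "trace_mat (A * B) = trace_mat (B * A)"
proof -
  have "trace_mat (A * B) = (\<Sum>i<m. \<Sum>k<n. A $$ (i,k) * B $$ (k,i))"
    using A B by (simp add: trace_mat_def scalar_prod_def atLeast0LessThan)
  also have "\<dots> = (\<Sum>k<n. \<Sum>i<m. B $$ (k,i) * A $$ (i,k))"
    by (subst sum.swap) (simp add: mult.commute)
  also have "\<dots> = trace_mat (B * A)"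
    using A B by (simp add: trace_mat_def scalar_prod_def atLeast0LessThan)
  finally show ?thesis .
qed

lemma trace_mat_square_upper_triangular:
  fixes B :: "'a :: comm_semiring_1 mat"
  assumes B: "B \<in> carrier_mat n n" and ut: "upper_triangular B"
  shows "trace_mat (B * B) = (\<Sum>i<n. (B $$ (i,i))\<^sup>2)"
proof -
  have "(B * B) $$ (i,i) = (B $$ (i,i))\<^sup>2" if i: "i < n" for i
  proof -
    have "B $$ (i,k) * B $$ (k,i) = 0" if "k < n" "k \<noteq> i" for k
      using that i B ut by (cases "k < i") (auto simp: upper_triangular_def)
    then have "(\<Sum>k\<in>{0..<n} - {i}. B $$ (i,k) * B $$ (k,i)) = 0"
      by (intro sum.neutral) auto
    then show ?thesis
      using i B by (simp add: scalar_prod_def sum.remove[of "{0..<n}" i] power2_eq_square)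
  qed
  then show ?thesis
    using B by (simp add: trace_mat_def)
qed

lemma sum_squares_eigenvalues_eq_trace_square:
  fixes M :: "'a :: conjugatable_ordered_field mat"
  assumes M: "M \<in> carrier_mat n n" and split: "char_poly M = (\<Prod>a\<leftarrow>as. [:-a, 1:])"
  shows "(\<Sum>a\<leftarrow>as. a\<^sup>2) = trace_mat (M * M)"
proof -
  obtain B P Q where "schur_decomposition M as = (B, P, Q)"
    by (cases "schur_decomposition M as")
  from schur_decomposition[OF M split this]
  have sim: "similar_mat_wit M B P Q" and ut: "upper_triangular B" and diag: "diag_mat B = as"
    by auto
  from similar_mat_witD2[OF M sim]
  have B: "B \<in> carrier_mat n n" and P: "P \<in> carrier_mat n n" and Q: "Q \<in> carrier_mat n n"
    and QP: "Q * P = 1\<^sub>m n" and M_eq: "M = P * B * Q"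
    by auto
  have "trace_mat (M * M) = trace_mat (P * (B * (Q * P) * B * Q))"
    unfolding M_eq using B P Q by (simp add: assoc_mult_mat[of _ n n _ n _ n])
  also have "\<dots> = trace_mat (P * (B * B * Q))"
    unfolding QP using B by simp
  also have "\<dots> = trace_mat (B * B * Q * P)"
    using B P Q by (simp add: trace_mat_mult_comm[of P n n] assoc_mult_mat[of _ n n _ n _ n])
  also have "\<dots> = trace_mat (B * B)"
    using B Q P QP by (simp add: assoc_mult_mat[of _ n n _ n _ n])
  also have "\<dots> = (\<Sum>i<n. (B $$ (i,i))\<^sup>2)"
    by (rule trace_mat_square_upper_triangular[OF B ut])
  also have "\<dots> = (\<Sum>a\<leftarrow>as. a\<^sup>2)"
    unfolding diag[symmetric] diag_mat_def using B
    by (simp add: sum_list_sum_nth atLeast0LessThan)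
  finally show ?thesis ..
qed

section \<open>The Schatten 4-norm\<close>

lemma proots_linear_factors: "proots (\<Prod>a\<leftarrow>as. [:-a, 1:]) = mset (as :: 'a :: idom list)"
proof -
  have "0 \<notin> set (map (\<lambda>a. [:-a, 1:]) as)"
    by force
  then have "proots (\<Prod>a\<leftarrow>as. [:-a, 1:]) = (\<Sum>a\<leftarrow>as. proots [:-a, 1:])"
    using proots_prod_list[of "map (\<lambda>a. [:-a, 1:]) as"] by (simp add: o_def)
  also have "\<dots> = mset as"
    by (induct as) auto
  finally show ?thesis .
qed

text \<open>No sign condition is needed since \<^const>\<open>sqrt\<close> is odd.\<close>

lemma sqrt_power4: "sqrt x ^ 4 = x\<^sup>2"
proof -
  have "sqrt x ^ 4 = sqrt ((x\<^sup>2)\<^sup>2)"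
    by (simp add: real_sqrt_power[symmetric])
  also have "\<dots> = x\<^sup>2"
    using real_sqrt_abs[of "x\<^sup>2"] by simp
  finally show ?thesis .
qed

lemma schatten4_eq_root_sum_squares_gram:
  fixes A :: "real mat"
  assumes A: "A \<in> carrier_mat m n"
  shows "schatten4 A = root 4 (\<Sum>i<n. \<Sum>j<n. ((transpose_mat A * A) $$ (i,j))\<^sup>2)"
proof -
  define M where "M = transpose_mat A * A"
  have M: "M \<in> carrier_mat n n"
    unfolding M_def using A by simp
  have sym: "transpose_mat M = M"
    unfolding M_def using A by (simp add: transpose_mult[of _ n m _ n])
  then have M_sym: "M $$ (j,i) = M $$ (i,j)" if "i < n" "j < n" for i j
    using that M by (metis carrier_matD index_transpose_mat(1))
  obtain rs where split: "char_poly M = (\<Prod>r\<leftarrow>rs. [:-r, 1:])"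
    using char_poly_real_symmetric_splits[OF M sym] .
  have "(\<Sum>s\<in>#singular_values A. s ^ 4) = (\<Sum>r\<leftarrow>rs. r\<^sup>2)"
    unfolding singular_values_def M_def[symmetric] split proots_linear_factors
    by (induct rs) (auto simp: sqrt_power4)
  also have "\<dots> = trace_mat (M * M)"
    by (rule sum_squares_eigenvalues_eq_trace_square[OF M split])
  also have "\<dots> = (\<Sum>i<n. \<Sum>j<n. (M $$ (i,j))\<^sup>2)"
    using M by (auto simp: trace_mat_def scalar_prod_def atLeast0LessThan M_sym power2_eq_square
        intro!: sum.cong)
  finally show ?thesis
    unfolding schatten4_def M_def by simp
qed

lemma schatten4_nonneg: "0 \<le> schatten4 A"
proof -
  have A: "A \<in> carrier_mat (dim_row A) (dim_col A)"
    by auto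
  show ?thesis
    unfolding schatten4_eq_root_sum_squares_gram[OF A] by (simp add: sum_nonneg)
qed

lemma schatten4_mult_mat_diag_le:
  fixes X :: "real mat"
  assumes X: "X \<in> carrier_mat m n" and e: "\<And>i. i < n \<Longrightarrow> \<bar>e i\<bar> \<le> c" and "0 \<le> c"
  shows "schatten4 (X * mat_diag n e) \<le> c * schatten4 X"
proof -
  let ?P = "transpose_mat X * X" and ?XE = "X * mat_diag n e"
  have XE: "?XE \<in> carrier_mat m n"
    using X by simp
  have gram: "(transpose_mat ?XE * ?XE) $$ (i,j) = e i * e j * ?P $$ (i,j)"
    if "i < n" "j < n" for i j
    using that X by (simp add: mat_diag_mult_right[OF X] scalar_prod_def sum_distrib_left mult_ac)
  have "((transpose_mat ?XE * ?XE) $$ (i,j))\<^sup>2 \<le> c ^ 4 * (?P $$ (i,j))\<^sup>2" if "i < n" "j < n" for i j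
  proof -
    have "\<bar>e i * e j\<bar> \<le> \<bar>c * c\<bar>"
      unfolding abs_mult using that e \<open>0 \<le> c\<close> by (simp add: mult_mono')
    then have "(e i * e j)\<^sup>2 \<le> (c * c)\<^sup>2"
      by (simp only: abs_le_square_iff)
    also have "(c * c)\<^sup>2 = c ^ 4"
      by (simp add: power4_eq_xxxx power2_eq_square mult.assoc)
    finally have "(e i * e j)\<^sup>2 \<le> c ^ 4" .
    then show ?thesis
      unfolding gram[OF that] power_mult_distrib[of "e i * e j"] by (simp add: mult_right_mono)
  qed
  then have "(\<Sum>i<n. \<Sum>j<n. ((transpose_mat ?XE * ?XE) $$ (i,j))\<^sup>2)
      \<le> c ^ 4 * (\<Sum>i<n. \<Sum>j<n. (?P $$ (i,j))\<^sup>2)"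
    unfolding sum_distrib_left by (intro sum_mono) auto
  then have "schatten4 ?XE \<le> root 4 (c ^ 4) * schatten4 X"
    unfolding schatten4_eq_root_sum_squares_gram[OF XE] schatten4_eq_root_sum_squares_gram[OF X]
    by (simp flip: real_root_mult)
  then show ?thesis
    using \<open>0 \<le> c\<close> by (simp add: real_root_power_cancel)
qed

section \<open>Euclidean norm and spectral norm\<close>

lemma scalar_prod_self_nonneg: "0 \<le> v \<bullet> (v :: real vec)"
  by (simp add: scalar_prod_def sum_nonneg)

lemma vnorm2_eq_sqrt_scalar_prod: "vnorm2 v = sqrt (v \<bullet> v)"
  by (simp add: vnorm2_def scalar_prod_def atLeast0LessThan power2_eq_square)

lemma vnorm2_nonneg: "0 \<le> vnorm2 v"
  by (simp add: vnorm2_eq_sqrt_scalar_prod scalar_prod_self_nonneg)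

lemma power2_vnorm2: "(vnorm2 v)\<^sup>2 = v \<bullet> v"
  by (simp add: vnorm2_eq_sqrt_scalar_prod scalar_prod_self_nonneg)

lemma abs_vec_index_le_vnorm2:
  assumes "i < dim_vec v"
  shows "\<bar>v $ i\<bar> \<le> vnorm2 v"
proof -
  have "(v $ i)\<^sup>2 \<le> (\<Sum>k<dim_vec v. (v $ k)\<^sup>2)"
    using assms by (intro member_le_sum) auto
  then show ?thesis
    unfolding vnorm2_def by (metis real_sqrt_abs real_sqrt_le_mono)
qed

lemma vnorm2_smult: "vnorm2 (a \<cdot>\<^sub>v v) = \<bar>a\<bar> * vnorm2 v"
proof -
  have "(a \<cdot>\<^sub>v v) \<bullet> (a \<cdot>\<^sub>v v) = a\<^sup>2 * (v \<bullet> v)"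
    by (simp add: power2_eq_square)
  then show ?thesis
    by (simp add: vnorm2_eq_sqrt_scalar_prod real_sqrt_mult)
qed

lemma abs_scalar_prod_le_vnorm2:
  assumes "v \<in> carrier_vec n" "w \<in> carrier_vec n"
  shows "\<bar>v \<bullet> w\<bar> \<le> vnorm2 v * vnorm2 w"
proof -
  have "(v \<bullet> w)\<^sup>2 \<le> (v \<bullet> v) * (w \<bullet> w)"
    using assms Cauchy_Schwarz_ineq_sum[of "\<lambda>i. v $ i" "\<lambda>i. w $ i" "{0..<n}"]
    by (simp add: scalar_prod_def power2_eq_square)
  then have "sqrt ((v \<bullet> w)\<^sup>2) \<le> sqrt ((v \<bullet> v) * (w \<bullet> w))"
    by (rule real_sqrt_le_mono)
  then show ?thesis
    by (simp add: vnorm2_eq_sqrt_scalar_prod real_sqrt_mult)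
qed

lemma power2_vnorm2_mult_mat_vec_le:
  fixes B :: "real mat"
  assumes B: "B \<in> carrier_mat m n" and x: "x \<in> carrier_vec n"
  shows "(vnorm2 (B *\<^sub>v x))\<^sup>2 \<le> (\<Sum>i<m. (vnorm2 (row B i))\<^sup>2) * (vnorm2 x)\<^sup>2"
proof -
  have "(row B i \<bullet> x)\<^sup>2 \<le> (vnorm2 (row B i))\<^sup>2 * (vnorm2 x)\<^sup>2" if "i < m" for i
  proof -
    have "\<bar>row B i \<bullet> x\<bar> \<le> vnorm2 (row B i) * vnorm2 x"
      using that B x by (intro abs_scalar_prod_le_vnorm2[of _ n]) auto
    then have "\<bar>row B i \<bullet> x\<bar>\<^sup>2 \<le> (vnorm2 (row B i) * vnorm2 x)\<^sup>2"
      by (rule power_mono) simp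
    then show ?thesis
      by (simp add: power_mult_distrib)
  qed
  then have "(\<Sum>i<m. (row B i \<bullet> x)\<^sup>2) \<le> (\<Sum>i<m. (vnorm2 (row B i))\<^sup>2) * (vnorm2 x)\<^sup>2"
    unfolding sum_distrib_right by (intro sum_mono) auto
  moreover have "(B *\<^sub>v x) \<bullet> (B *\<^sub>v x) = (\<Sum>i<m. (row B i \<bullet> x)\<^sup>2)"
    using B by (simp add: scalar_prod_def[of "B *\<^sub>v x"] atLeast0LessThan power2_eq_square)
  ultimately show ?thesis
    by (simp add: power2_vnorm2)
qed

lemma spec_norm_bdd_above:
  "bdd_above (insert 0 {vnorm2 (B *\<^sub>v x) | x. x \<in> carrier_vec (dim_col B) \<and> vnorm2 x = 1})"
proof (rule bdd_aboveI)
  fix y assume "y \<in> insert 0 {vnorm2 (B *\<^sub>v x) | x. x \<in> carrier_vec (dim_col B) \<and> vnorm2 x = 1}"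
  then show "y \<le> sqrt (\<Sum>i<dim_row B. (vnorm2 (row B i))\<^sup>2)"
  proof
    fix x assume "y \<in> {vnorm2 (B *\<^sub>v x) | x. x \<in> carrier_vec (dim_col B) \<and> vnorm2 x = 1}"
    then obtain x where x: "x \<in> carrier_vec (dim_col B)" "vnorm2 x = 1"
      and y: "y = vnorm2 (B *\<^sub>v x)"
      by blast
    show ?thesis
      unfolding y using power2_vnorm2_mult_mat_vec_le[OF _ x(1), of B "dim_row B"] x(2)
      by (intro real_le_rsqrt) auto
  qed (simp add: sum_nonneg)
qed

lemma spec_norm_nonneg: "0 \<le> spec_norm B"
  unfolding spec_norm_def by (rule cSup_upper[OF _ spec_norm_bdd_above]) simp

lemma vnorm2_mult_mat_vec_le_spec_norm:
  assumes "x \<in> carrier_vec (dim_col B)" "vnorm2 x = 1"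
  shows "vnorm2 (B *\<^sub>v x) \<le> spec_norm B"
  unfolding spec_norm_def by (rule cSup_upper[OF _ spec_norm_bdd_above]) (use assms in blast)

lemma spec_norm_leI:
  assumes "0 \<le> c"
    and "\<And>x. x \<in> carrier_vec (dim_col B) \<Longrightarrow> vnorm2 x = 1 \<Longrightarrow> vnorm2 (B *\<^sub>v x) \<le> c"
  shows "spec_norm B \<le> c"
  unfolding spec_norm_def by (rule cSup_least) (use assms in auto)

lemma vnorm2_row_le_spec_norm:
  assumes i: "i < dim_row B"
  shows "vnorm2 (row B i) \<le> spec_norm B"
proof (cases "vnorm2 (row B i) = 0")
  case True
  then show ?thesis
    using spec_norm_nonneg by simp
next
  case False
  define r where "r = vnorm2 (row B i)"
  define x where "x = (1 / r) \<cdot>\<^sub>v row B i"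
  have r: "0 < r"
    using False vnorm2_nonneg[of "row B i"] unfolding r_def by linarith
  have x: "x \<in> carrier_vec (dim_col B)" "vnorm2 x = 1"
    unfolding x_def using r by (simp_all add: vnorm2_smult r_def)
  have "(B *\<^sub>v x) $ i = (1 / r) * (row B i \<bullet> row B i)"
    using i unfolding x_def by simp
  also have "\<dots> = r"
    using r by (simp add: power2_vnorm2[symmetric] r_def[symmetric] power2_eq_square)
  finally have "(B *\<^sub>v x) $ i = r" .
  then have "r \<le> vnorm2 (B *\<^sub>v x)"
    using abs_vec_index_le_vnorm2[of i "B *\<^sub>v x"] i by simp
  also have "\<dots> \<le> spec_norm B"
    by (rule vnorm2_mult_mat_vec_le_spec_norm[OF x])
  finally show ?thesis
    unfolding r_def .
qed

lemma spec_norm_le_sqrt_of_unit_rows: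
  fixes B :: "real mat"
  assumes B: "B \<in> carrier_mat m n" and rows: "\<And>i. i < m \<Longrightarrow> vnorm2 (row B i) = 1"
  shows "spec_norm B \<le> sqrt m"
proof (rule spec_norm_leI)
  fix x assume x: "x \<in> carrier_vec (dim_col B)" "vnorm2 x = 1"
  have "(vnorm2 (B *\<^sub>v x))\<^sup>2 \<le> (\<Sum>i<m. (vnorm2 (row B i))\<^sup>2) * (vnorm2 x)\<^sup>2"
    using B x by (intro power2_vnorm2_mult_mat_vec_le) auto
  also have "\<dots> = m"
    using rows x(2) by simp
  finally show "vnorm2 (B *\<^sub>v x) \<le> sqrt m"
    by (rule real_le_rsqrt)
qed simp

lemma quadratic_form_le_sparsity:
  fixes Q :: "real mat"
  assumes Q: "Q \<in> carrier_mat m m" and sym: "transpose_mat Q = Q"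
    and bound: "\<And>i k. i < m \<Longrightarrow> k < m \<Longrightarrow> \<bar>Q $$ (i,k)\<bar> \<le> 1"
    and sparse: "\<And>i. i < m \<Longrightarrow> card {k. k < m \<and> Q $$ (i,k) \<noteq> 0} \<le> K"
    and y: "y \<in> carrier_vec m"
  shows "y \<bullet> (Q *\<^sub>v y) \<le> K * (y \<bullet> y)"
proof -
  have Q_sym: "Q $$ (k,i) = Q $$ (i,k)" if "i < m" "k < m" for i k
    using that Q by (metis carrier_matD index_transpose_mat(1) sym)
  define f where "f i k = (if Q $$ (i,k) \<noteq> 0 then (y $ i)\<^sup>2 else 0)" for i k
  have AM_GM: "y $ i * y $ k * Q $$ (i,k) \<le> (f i k + f k i) / 2" if "i < m" "k < m" for i k
  proof (cases "Q $$ (i,k) = 0")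
    case False
    have "y $ i * y $ k * Q $$ (i,k) \<le> \<bar>y $ i * y $ k\<bar> * \<bar>Q $$ (i,k)\<bar>"
      by (metis abs_ge_self abs_mult)
    also have "\<dots> \<le> \<bar>y $ i * y $ k\<bar>"
      using bound[OF that] by (simp add: mult_left_le)
    also have "\<dots> \<le> ((y $ i)\<^sup>2 + (y $ k)\<^sup>2) / 2"
      using sum_squares_bound[of "\<bar>y $ i\<bar>" "\<bar>y $ k\<bar>"] by (simp add: abs_mult)
    finally show ?thesis
      using False Q_sym[OF that] unfolding f_def by simp
  qed (use Q_sym[OF that] in \<open>simp add: f_def\<close>)
  have "y \<bullet> (Q *\<^sub>v y) = (\<Sum>i<m. \<Sum>k<m. y $ i * y $ k * Q $$ (i,k))"
    using Q y by (simp add: scalar_prod_def atLeast0LessThan sum_distrib_left mult_ac)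
  also have "\<dots> \<le> (\<Sum>i<m. \<Sum>k<m. (f i k + f k i) / 2)"
    using AM_GM by (intro sum_mono) auto
  also have "\<dots> = ((\<Sum>i<m. \<Sum>k<m. f i k) + (\<Sum>i<m. \<Sum>k<m. f k i)) / 2"
    by (simp add: sum.distrib add_divide_distrib sum_divide_distrib)
  also have "(\<Sum>i<m. \<Sum>k<m. f k i) = (\<Sum>i<m. \<Sum>k<m. f i k)"
    by (rule sum.swap)
  also have "((\<Sum>i<m. \<Sum>k<m. f i k) + (\<Sum>i<m. \<Sum>k<m. f i k)) / 2 = (\<Sum>i<m. \<Sum>k<m. f i k)"
    by simp
  also have "\<dots> \<le> (\<Sum>i<m. K * (y $ i)\<^sup>2)"
  proof (intro sum_mono)
    fix i assume i: "i \<in> {..<m}"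
    have "(\<Sum>k<m. f i k) = card {k. k < m \<and> Q $$ (i,k) \<noteq> 0} * (y $ i)\<^sup>2"
      unfolding f_def by (simp add: sum.inter_filter[symmetric])
    also have "\<dots> \<le> K * (y $ i)\<^sup>2"
      using sparse i by (intro mult_right_mono) auto
    finally show "(\<Sum>k<m. f i k) \<le> K * (y $ i)\<^sup>2" .
  qed
  also have "\<dots> = K * (y \<bullet> y)"
    using y by (simp add: scalar_prod_def atLeast0LessThan sum_distrib_left power2_eq_square)
  finally show ?thesis .
qed

lemma spec_norm_le_sqrt_sparsity:
  fixes B :: "real mat"
  assumes B: "B \<in> carrier_mat m n"
    and bound: "\<And>i k. i < m \<Longrightarrow> k < m \<Longrightarrow> \<bar>(B * transpose_mat B) $$ (i,k)\<bar> \<le> 1"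
    and sparse: "\<And>i. i < m \<Longrightarrow> card {k. k < m \<and> (B * transpose_mat B) $$ (i,k) \<noteq> 0} \<le> K"
  shows "spec_norm B \<le> sqrt K"
proof (rule spec_norm_leI)
  fix x assume x: "x \<in> carrier_vec (dim_col B)" "vnorm2 x = 1"
  then have x_n: "x \<in> carrier_vec n"
    using B by simp
  \<comment> \<open>\<open>|y|\<^sup>2 = z \<bullet> x \<le> |z|\<close> and \<open>|z|\<^sup>2 = y \<bullet> (B B\<^sup>T) y \<le> K |y|\<^sup>2\<close>, hence \<open>|y|\<^sup>2 \<le> K\<close>.\<close>
  define y where "y = B *\<^sub>v x"
  define z where "z = transpose_mat B *\<^sub>v y"
  have y: "y \<in> carrier_vec m" and z: "z \<in> carrier_vec n"
    unfolding y_def z_def using B x_n by auto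
  have "y \<bullet> y = z \<bullet> x"
    unfolding z_def using transpose_vec_mult_scalar[OF B x_n y] y_def by simp
  also have "\<dots> \<le> vnorm2 z"
    using abs_scalar_prod_le_vnorm2[OF z x_n] x(2) by simp
  finally have "(y \<bullet> y)\<^sup>2 \<le> (vnorm2 z)\<^sup>2"
    using scalar_prod_self_nonneg[of y] by (intro power_mono)
  also have "\<dots> = y \<bullet> (B *\<^sub>v z)"
    unfolding power2_vnorm2 using transpose_vec_mult_scalar[OF B z y] z_def by simp
  also have "B *\<^sub>v z = (B * transpose_mat B) *\<^sub>v y"
    unfolding z_def using B y by simp
  also have "y \<bullet> ((B * transpose_mat B) *\<^sub>v y) \<le> K * (y \<bullet> y)"
    by (rule quadratic_form_le_sparsity) (use B y bound sparse in \<open>auto simp: transpose_mult\<close>)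
  finally have "y \<bullet> y \<le> K"
    using scalar_prod_self_nonneg[of y] by (cases "y \<bullet> y = 0") (auto simp: power2_eq_square)
  then show "vnorm2 (B *\<^sub>v x) \<le> sqrt K"
    unfolding vnorm2_eq_sqrt_scalar_prod y_def[symmetric] by (rule real_sqrt_le_mono)
qed simp

section \<open>Inverses and diagonal scalings\<close>

lemma inverts_mat_carrier:
  assumes A: "A \<in> carrier_mat n n" and "inverts_mat A B" "inverts_mat B A"
  shows "B \<in> carrier_mat n n"
proof -
  have AB: "A * B = 1\<^sub>m n" and BA: "B * A = 1\<^sub>m (dim_row B)"
    using A assms(2,3) unfolding inverts_mat_def by auto
  have "dim_col B = n"
    using arg_cong[OF AB, of dim_col] by simp
  moreover have "dim_row B = n"
    using arg_cong[OF BA, of dim_col] A by simp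
  ultimately show ?thesis
    by blast
qed

lemma mat_inv_eqI:
  assumes A: "A \<in> carrier_mat n n" and B: "B \<in> carrier_mat n n" and AB: "A * B = 1\<^sub>m n"
  shows "mat_inv A = B"
  unfolding mat_inv_def
proof (rule some_equality)
  show "inverts_mat A B \<and> inverts_mat B A"
    using A B AB mat_mult_left_right_inverse[OF A B AB] unfolding inverts_mat_def by auto
next
  fix B' assume B': "inverts_mat A B' \<and> inverts_mat B' A"
  then have B'_carrier: "B' \<in> carrier_mat n n"
    using inverts_mat_carrier[OF A] by blast
  then have "B' = (B' * A) * B"
    using A B AB by (simp add: assoc_mult_mat[of _ n n _ n _ n])
  also have "B' * A = 1\<^sub>m n"
    using B' B'_carrier unfolding inverts_mat_def by auto
  finally show "B' = B"
    using B by simp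
qed

lemma
  fixes A :: "real mat"
  assumes A: "A \<in> carrier_mat n n" and "invertible_mat A"
  shows mat_inv_carrier: "mat_inv A \<in> carrier_mat n n"
    and mult_mat_inv_right: "A * mat_inv A = 1\<^sub>m n"
proof -
  obtain B where "inverts_mat A B" "inverts_mat B A"
    using assms(2) unfolding invertible_mat_def by blast
  then have B: "B \<in> carrier_mat n n" and AB: "A * B = 1\<^sub>m n"
    using inverts_mat_carrier[OF A] A unfolding inverts_mat_def by auto
  then show "mat_inv A \<in> carrier_mat n n" "A * mat_inv A = 1\<^sub>m n"
    using mat_inv_eqI[OF A B AB] by auto
qed

lemma mat_diag_mult_reciprocal:
  fixes f :: "nat \<Rightarrow> 'a :: field"
  assumes "\<And>i. i < n \<Longrightarrow> f i \<noteq> 0"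
  shows "mat_diag n f * mat_diag n (\<lambda>i. 1 / f i) = 1\<^sub>m n"
proof -
  have "f i * (1 / f i) = 1" if "i < n" for i
    using assms[OF that] by simp
  then show ?thesis
    unfolding mat_diag_diag by (auto intro!: eq_matI simp: mat_diag_def)
qed

lemma mat_inv_mat_diag:
  assumes "\<And>i. i < n \<Longrightarrow> f i \<noteq> 0"
  shows "mat_inv (mat_diag n f) = mat_diag n (\<lambda>i. 1 / f i)"
  by (rule mat_inv_eqI[OF mat_diag_dim mat_diag_dim mat_diag_mult_reciprocal[OF assms]])

lemma mat_diag_mult_carrier [simp]: "A \<in> carrier_mat n m \<Longrightarrow> mat_diag n f * A \<in> carrier_mat n m"
  by (rule mult_carrier_mat[OF mat_diag_dim])

lemma mat_inv_mat_diag_mult: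
  fixes L :: "real mat"
  assumes L: "L \<in> carrier_mat n n" "invertible_mat L" and f: "\<And>i. i < n \<Longrightarrow> f i \<noteq> 0"
  shows "mat_inv (mat_diag n f * L) = mat_inv L * mat_diag n (\<lambda>i. 1 / f i)"
proof (rule mat_inv_eqI[of _ n])
  have "mat_diag n f * L * (mat_inv L * mat_diag n (\<lambda>i. 1 / f i))
      = mat_diag n f * (L * mat_inv L) * mat_diag n (\<lambda>i. 1 / f i)"
    using L mat_inv_carrier[OF L] by (simp add: assoc_mult_mat[of _ n n _ n _ n])
  also have "\<dots> = mat_diag n f * mat_diag n (\<lambda>i. 1 / f i)"
    using mult_mat_inv_right[OF L]
    by (simp add: right_mult_one_mat[OF mat_diag_dim] del: mat_diag_diag)
  also have "\<dots> = 1\<^sub>m n"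
    by (rule mat_diag_mult_reciprocal[OF f])
  finally show "mat_diag n f * L * (mat_inv L * mat_diag n (\<lambda>i. 1 / f i)) = 1\<^sub>m n" .
qed (use L mat_inv_carrier[OF L] in auto)

lemma diagonal_mat_eq_mat_diag:
  assumes "A \<in> carrier_mat n n" "diagonal_mat A"
  shows "A = mat_diag n (\<lambda>i. A $$ (i,i))"
  using assms by (auto intro!: eq_matI simp: diagonal_mat_def mat_diag_def)

lemma invertible_mat_diag_nonzero:
  fixes f :: "nat \<Rightarrow> real"
  assumes inv: "invertible_mat (mat_diag n f)" and i: "i < n"
  shows "f i \<noteq> 0"
proof -
  have "(mat_diag n f * mat_inv (mat_diag n f)) $$ (i,i) = 1"
    using mult_mat_inv_right[OF mat_diag_dim inv] i by simp
  then have "f i * mat_inv (mat_diag n f) $$ (i,i) = 1"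
    using i by (simp add: mat_diag_mult_left[OF mat_inv_carrier[OF mat_diag_dim inv]])
  then show ?thesis
    by auto
qed

lemma row_mat_diag_mult:
  assumes "A \<in> carrier_mat n m" "i < n"
  shows "row (mat_diag n f * A) i = f i \<cdot>\<^sub>v row A i"
  using assms by (auto intro!: eq_vecI simp: mat_diag_mult_left)

section \<open>Jacobi scaling\<close>

lemma jacobi_diag_eq_mat_diag:
  assumes "L \<in> carrier_mat n n"
  shows "jacobi_diag L = mat_diag n (\<lambda>i. vnorm2 (row L i))"
  using assms
  by (auto intro!: eq_matI simp: jacobi_diag_def mat_diag_def vnorm2_eq_sqrt_scalar_prod)

lemma vnorm2_row_pos_of_invertible:
  fixes L :: "real mat"
  assumes L: "L \<in> carrier_mat n n" "invertible_mat L" and i: "i < n"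
  shows "0 < vnorm2 (row L i)"
proof -
  let ?L' = "mat_inv L"
  have "(L * ?L') $$ (i,i) = 1"
    using mult_mat_inv_right[OF L] i by simp
  then have "row L i \<bullet> col ?L' i = 1"
    using L i mat_inv_carrier[OF L] by simp
  moreover have "\<bar>row L i \<bullet> col ?L' i\<bar> \<le> vnorm2 (row L i) * vnorm2 (col ?L' i)"
    using L i mat_inv_carrier[OF L] by (intro abs_scalar_prod_le_vnorm2[of _ n]) auto
  ultimately have "vnorm2 (row L i) \<noteq> 0"
    by auto
  then show ?thesis
    using vnorm2_nonneg[of "row L i"] by linarith
qed

lemma mat_inv_jacobi_diag:
  fixes L :: "real mat"
  assumes L: "L \<in> carrier_mat n n" "invertible_mat L"
  shows "mat_inv (jacobi_diag L) = mat_diag n (\<lambda>i. 1 / vnorm2 (row L i))"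
  unfolding jacobi_diag_eq_mat_diag[OF L(1)]
  using vnorm2_row_pos_of_invertible[OF L] by (intro mat_inv_mat_diag) fastforce

lemma vnorm2_row_jacobi_scaled:
  fixes L :: "real mat"
  assumes L: "L \<in> carrier_mat n n" "invertible_mat L" and i: "i < n"
  shows "vnorm2 (row (mat_inv (jacobi_diag L) * L) i) = 1"
  unfolding mat_inv_jacobi_diag[OF L] row_mat_diag_mult[OF L(1) i] vnorm2_smult
  using vnorm2_row_pos_of_invertible[OF L i] by simp

lemma spec_norm_jacobi_scaled_le_sqrt_dim:
  fixes L :: "real mat"
  assumes L: "L \<in> carrier_mat n n" "invertible_mat L"
  shows "spec_norm (mat_inv (jacobi_diag L) * L) \<le> sqrt n"
proof (rule spec_norm_le_sqrt_of_unit_rows)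
  show "mat_inv (jacobi_diag L) * L \<in> carrier_mat n n"
    unfolding mat_inv_jacobi_diag[OF L] using L by simp
qed (rule vnorm2_row_jacobi_scaled[OF L])

lemma spec_norm_jacobi_scaled_le_sqrt_sparsity:
  fixes L :: "real mat"
  assumes L: "L \<in> carrier_mat n n" "invertible_mat L"
    and sparse: "\<And>i. i < n \<Longrightarrow> card {k. k < n \<and> (L * transpose_mat L) $$ (i,k) \<noteq> 0} \<le> K"
  shows "spec_norm (mat_inv (jacobi_diag L) * L) \<le> sqrt K"
proof -
  define d where "d i = vnorm2 (row L i)" for i
  define B where "B = mat_inv (jacobi_diag L) * L"
  have d: "0 < d i" if "i < n" for i
    unfolding d_def by (rule vnorm2_row_pos_of_invertible[OF L that])
  have B: "B \<in> carrier_mat n n"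
    unfolding B_def mat_inv_jacobi_diag[OF L] using L by simp
  have rows: "row B i = (1 / d i) \<cdot>\<^sub>v row L i" if "i < n" for i
    unfolding B_def mat_inv_jacobi_diag[OF L] d_def by (rule row_mat_diag_mult[OF L(1) that])
  have gram: "(B * transpose_mat B) $$ (i,k) = (L * transpose_mat L) $$ (i,k) / (d i * d k)"
    if "i < n" "k < n" for i k
    using that B L by (simp add: rows)
  show ?thesis
    unfolding B_def[symmetric]
  proof (rule spec_norm_le_sqrt_sparsity[OF B])
    fix i k assume ik: "i < n" "k < n"
    have "\<bar>(L * transpose_mat L) $$ (i,k)\<bar> \<le> d i * d k"
      using abs_scalar_prod_le_vnorm2[of "row L i" n "row L k"] L ik unfolding d_def by simp
    moreover have "0 < d i * d k"
      using d ik by simp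
    ultimately show "\<bar>(B * transpose_mat B) $$ (i,k)\<bar> \<le> 1"
      by (simp add: gram[OF ik] abs_divide)
  next
    fix i assume i: "i < n"
    have "{k. k < n \<and> (B * transpose_mat B) $$ (i,k) \<noteq> 0}
        = {k. k < n \<and> (L * transpose_mat L) $$ (i,k) \<noteq> 0}"
      using d i by (auto simp: gram less_imp_neq[symmetric])
    then show "card {k. k < n \<and> (B * transpose_mat B) $$ (i,k) \<noteq> 0} \<le> K"
      using sparse[OF i] by simp
  qed
qed

lemma schatten4_inv_jacobi_scaled_le_kappa:
  fixes L G :: "real mat"
  assumes L: "L \<in> carrier_mat n n" "invertible_mat L"
    and G: "G \<in> carrier_mat n n" "diagonal_mat G" "invertible_mat G"
  shows "schatten4 (mat_inv (mat_inv (jacobi_diag L) * L)) \<le> kappa (mat_inv G * L)"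
proof -
  define d where "d i = vnorm2 (row L i)" for i
  define g where "g i = G $$ (i,i)" for i
  have G_eq: "G = mat_diag n g"
    unfolding g_def by (rule diagonal_mat_eq_mat_diag[OF G(1,2)])
  have d: "0 < d i" if "i < n" for i
    unfolding d_def by (rule vnorm2_row_pos_of_invertible[OF L that])
  have g: "g i \<noteq> 0" if "i < n" for i
    using invertible_mat_diag_nonzero[of n g i] G(3) G_eq that by simp
  have D_inv: "mat_inv (jacobi_diag L) = mat_diag n (\<lambda>i. 1 / d i)"
    unfolding d_def by (rule mat_inv_jacobi_diag[OF L])
  have G_inv: "mat_inv G = mat_diag n (\<lambda>i. 1 / g i)"
    unfolding G_eq by (rule mat_inv_mat_diag) (rule g)
  have d': "1 / d i \<noteq> 0" and g': "1 / g i \<noteq> 0" if "i < n" for i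
    using d[OF that] g[OF that] by simp_all
  have inv_GL: "mat_inv (mat_inv G * L) = mat_inv L * mat_diag n g"
    using mat_inv_mat_diag_mult[where f = "\<lambda>i. 1 / g i", OF L g'] unfolding G_inv by simp
  have "mat_inv (mat_inv (jacobi_diag L) * L) = mat_inv L * mat_diag n d"
    using mat_inv_mat_diag_mult[where f = "\<lambda>i. 1 / d i", OF L d'] unfolding D_inv by simp
  also have "mat_diag n d = mat_diag n g * mat_diag n (\<lambda>i. d i / g i)"
    unfolding mat_diag_diag using g by (auto intro!: eq_matI simp: mat_diag_def)
  finally have inv_DL: "mat_inv (mat_inv (jacobi_diag L) * L)
      = (mat_inv L * mat_diag n g) * mat_diag n (\<lambda>i. d i / g i)"
    using mat_inv_carrier[OF L] by (simp add: assoc_mult_mat[of _ n n _ n _ n])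
  have GL: "mat_inv G * L \<in> carrier_mat n n"
    unfolding G_inv using L by simp
  have ratio_le: "\<bar>d i / g i\<bar> \<le> spec_norm (mat_inv G * L)" if i: "i < n" for i
  proof -
    have "vnorm2 (row (mat_inv G * L) i) = \<bar>d i / g i\<bar>"
      unfolding G_inv row_mat_diag_mult[OF L(1) i] vnorm2_smult
      using d[OF i] by (simp add: d_def abs_divide)
    moreover have "vnorm2 (row (mat_inv G * L) i) \<le> spec_norm (mat_inv G * L)"
      using i GL by (metis carrier_matD(1) vnorm2_row_le_spec_norm)
    ultimately show ?thesis
      by simp
  qed
  have "schatten4 (mat_inv (mat_inv (jacobi_diag L) * L))
      \<le> spec_norm (mat_inv G * L) * schatten4 (mat_inv L * mat_diag n g)"
    unfolding inv_DL using mat_inv_carrier[OF L]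
    by (intro schatten4_mult_mat_diag_le[where m = n, OF _ ratio_le spec_norm_nonneg]) auto
  also have "\<dots> = kappa (mat_inv G * L)"
    unfolding kappa_def inv_GL ..
  finally show ?thesis .
qed

lemma kappa_nonneg: "0 \<le> kappa B"
  unfolding kappa_def by (simp add: spec_norm_nonneg schatten4_nonneg)

lemma kappa_jacobi_scaled_le:
  fixes L G :: "real mat"
  assumes "L \<in> carrier_mat n n" "invertible_mat L"
    and "G \<in> carrier_mat n n" "diagonal_mat G" "invertible_mat G"
  shows "kappa (mat_inv (jacobi_diag L) * L)
    \<le> spec_norm (mat_inv (jacobi_diag L) * L) * kappa (mat_inv G * L)"
  unfolding kappa_def[of "mat_inv (jacobi_diag L) * L"]
  by (rule mult_left_mono[OF schatten4_inv_jacobi_scaled_le_kappa[OF assms] spec_norm_nonneg])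

theorem proposition2:
  fixes L Dopt :: "real mat" and N K :: nat
  assumes "L \<in> carrier_mat N N" and "invertible_mat L"
    and "Dopt \<in> carrier_mat N N" and "diagonal_mat Dopt" and "invertible_mat Dopt"
    and "\<forall>G \<in> carrier_mat N N. diagonal_mat G \<and> invertible_mat G \<longrightarrow>
           kappa (mat_inv Dopt * L) \<le> kappa (mat_inv G * L)"
  shows "kappa (mat_inv (jacobi_diag L) * L) \<le> sqrt (real N) * kappa (mat_inv Dopt * L)
     \<and> ((\<forall>i<N. card {j. j < N \<and> (L * transpose_mat L) $$ (i,j) \<noteq> 0} \<le> K) \<longrightarrow>
        kappa (mat_inv (jacobi_diag L) * L) \<le> sqrt (real K) * kappa (mat_inv Dopt * L))"
proof -
  let ?B = "mat_inv (jacobi_diag L) * L"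
  have bound: "kappa ?B \<le> c * kappa (mat_inv Dopt * L)" if "spec_norm ?B \<le> c" for c
    using kappa_jacobi_scaled_le[OF assms(1-5)]
      mult_right_mono[OF that kappa_nonneg[of "mat_inv Dopt * L"]]
    by linarith
  show ?thesis
  proof (intro conjI impI)
    show "kappa ?B \<le> sqrt (real N) * kappa (mat_inv Dopt * L)"
      by (rule bound[OF spec_norm_jacobi_scaled_le_sqrt_dim[OF assms(1,2)]])
  next
    assume "\<forall>i<N. card {j. j < N \<and> (L * transpose_mat L) $$ (i,j) \<noteq> 0} \<le> K"
    then show "kappa ?B \<le> sqrt (real K) * kappa (mat_inv Dopt * L)"
      by (intro bound spec_norm_jacobi_scaled_le_sqrt_sparsity[OF assms(1,2)]) blast
  qed
qed

end
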